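(* Let $\Lambda$ be a weight function with polynomial growth, $\rho\in(0,\tfrac1\mu]$, $1<p<\infty$, $m\in\mathbb{R}$, $\sigma\in M^m_{\rho,\Lambda}$, $\lambda>0$, $\tau\ge0$ and $x_0,\xi_0\in\mathbb{R}^n$. Then $$R_{\lambda,\tau}(x_0,\xi_0)^{-1}\,T_\sigma\,R_{\lambda,\tau}(x_0,\xi_0)=T_{\sigma_{\lambda,\tau}},\qquad \sigma_{\lambda,\tau}(x,\eta)=\sigma\big(x_0+\lambda^{-\tau}x,\ \lambda\xi_0+\lambda^{\tau}\eta\big),\quad x,\eta\in\mathbb{R}^n.$$ Moreover, if $\sigma\in M^0_{\rho,\Lambda}$, $\lambda\ge1$, $0\le\tau\le\rho\mu_0/(1+\rho\mu_0)$ and $\xi_0\neq0$, then for all multi-indices $\alpha,\beta$ there is a positive constant $C_\beta$ such that $$|(\partial_x^\alpha\partial_\eta^\beta\sigma_{\lambda,\tau})(x,\eta)|\le C_\beta\,p_{\alpha,\beta}(\sigma)\,\frac{\Lambda(\eta)^{\rho|\beta|}}{|\xi_0|^{\rho\mu_0|\beta|}}\,\lambda^{-\tau|\alpha|}\,\lambda^{-(\rho\mu_0-(1+\rho\mu_0)\tau)|\beta|},\qquad x,\eta\in\mathbb{R}^n.$$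
   Context: A positive function $\Lambda\in C^\infty(\mathbb{R}^n)$ is a weight function with polynomial growth if there are constants $0<\mu_0\le\mu_1$, $0<C_0\le C_1$ with $C_0(1+|\xi|)^{\mu_0}\le\Lambda(\xi)\le C_1(1+|\xi|)^{\mu_1}$ for all $\xi$, and there is a real $\mu\ge\mu_1$ such that for all multi-indices $\alpha,\gamma$ with $\gamma_j\in\{0,1\}$ there is $C_{\alpha,\gamma}>0$ with $|\xi^\gamma(\partial^{\alpha+\gamma}\Lambda)(\xi)|\le C_{\alpha,\gamma}\Lambda(\xi)^{1-|\alpha|/\mu}$. For $m\in\mathbb{R}$ and $\rho\in(0,1/\mu]$, $S^m_{\rho,\Lambda}$ is the set of $\sigma\in C^\infty(\mathbb{R}^n\times\mathbb{R}^n)$ with $|\partial_x^\alpha\partial_\xi^\beta\sigma(x,\xi)|\le C_{\alpha,\beta}\Lambda(\xi)^{m-\rho|\beta|}$ for all $\alpha,\beta$; $M^m_{\rho,\Lambda}$ is the set of $\sigma$ with $\xi^\gamma\partial_\xi^\gamma\sigma\in S^m_{\rho,\Lambda}$ for all $\gamma\in\{0,1\}^n$. For $\sigma\in M^0_{\rho,\Lambda}$, $p_{\alpha,\beta}(\sigma)=\sup_{x,\xi}\Lambda(\xi)^{\rho|\beta|}|\partial_x^\alpha\partial_\xi^\beta\sigma(x,\xi)|$. For a smooth symbol $a$, $(T_a\varphi)(x)=(2\pi)^{-n/2}\int e^{ix\cdot\xi}a(x,\xi)\hat\varphi(\xi)\,d\xi$ for Schwartz $\varphi$, where $\hat\varphi(\xi)=(2\pi)^{-n/2}\int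 e^{-ix\cdot\xi}\varphi(x)dx$. The operator $R_{\lambda,\tau}(x_0,\xi_0)$ on $L^p(\mathbb{R}^n)$ is $(R_{\lambda,\tau}(x_0,\xi_0)u)(x)=\lambda^{\tau n/p}e^{i\lambda x\cdot\xi_0}u(\lambda^\tau(x-x_0))$; it is a surjective isometry with inverse $(R_{\lambda,\tau}(x_0,\xi_0)^{-1}u)(x)=\lambda^{-\tau n/p}e^{-i\lambda(x_0+\lambda^{-\tau}x)\cdot\xi_0}u(x_0+\lambda^{-\tau}x)$. The operator identity is meant on the Schwartz space. *)

theory Defs
  imports "HOL-Analysis.Analysis"
begin

definition dderiv :: "'a::real_normed_vector \<Rightarrow> ('a \<Rightarrow> 'b::real_normed_vector) \<Rightarrow> 'a \<Rightarrow> 'b" where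
  "dderiv v f x = vector_derivative (\<lambda>t. f (x + t *\<^sub>R v)) (at 0)"

fun dderivs :: "'a::real_normed_vector list \<Rightarrow> ('a \<Rightarrow> 'b::real_normed_vector) \<Rightarrow> 'a \<Rightarrow> 'b" where
  "dderivs [] f = f"
| "dderivs (v # vs) f = dderiv v (dderivs vs f)"

definition smooth :: "('a::euclidean_space \<Rightarrow> 'b::real_normed_vector) \<Rightarrow> bool" where
  "smooth f \<longleftrightarrow> (\<forall>vs. set vs \<subseteq> Basis \<longrightarrow>
      continuous_on UNIV (dderivs vs f) \<and>
      (\<forall>v\<in>Basis. \<forall>x. (\<lambda>t::real. dderivs vs f (x + t *\<^sub>R v)) differentiable (at 0)))"

definition coords :: "'n::finite list" where
  "coords = (SOME xs. distinct xs \<and> set xs = UNIV)"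

definition mlen :: "('n::finite \<Rightarrow> nat) \<Rightarrow> nat" where
  "mlen \<alpha> = (\<Sum>i\<in>UNIV. \<alpha> i)"

definition mi_dirs :: "('n::finite \<Rightarrow> nat) \<Rightarrow> (real^'n) list" where
  "mi_dirs \<alpha> = concat (map (\<lambda>i. replicate (\<alpha> i) (axis i 1)) coords)"

definition pd :: "('n::finite \<Rightarrow> nat) \<Rightarrow> (real^'n \<Rightarrow> 'b::real_normed_vector) \<Rightarrow> real^'n \<Rightarrow> 'b" where
  "pd \<alpha> f = dderivs (mi_dirs \<alpha>) f"

definition sd :: "('n::finite \<Rightarrow> nat) \<Rightarrow> ('n \<Rightarrow> nat) \<Rightarrow> (real^'n \<Rightarrow> real^'n \<Rightarrow> 'b::real_normed_vector)
     \<Rightarrow> real^'n \<Rightarrow> real^'n \<Rightarrow> 'b" where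
  "sd \<alpha> \<beta> \<sigma> x \<xi> = dderivs (map (\<lambda>v. (v, 0)) (mi_dirs \<alpha>) @ map (\<lambda>v. (0, v)) (mi_dirs \<beta>))
       (\<lambda>z. \<sigma> (fst z) (snd z)) (x, \<xi>)"

definition smooth2 :: "(real^'n::finite \<Rightarrow> real^'n \<Rightarrow> 'b::real_normed_vector) \<Rightarrow> bool" where
  "smooth2 \<sigma> \<longleftrightarrow> smooth (\<lambda>z::(real^'n) \<times> (real^'n). \<sigma> (fst z) (snd z))"

definition mono :: "('n::finite \<Rightarrow> nat) \<Rightarrow> real^'n \<Rightarrow> real" where
  "mono \<gamma> \<xi> = (\<Prod>i\<in>UNIV. (\<xi> $ i) ^ (\<gamma> i))"

definition zero_one_index :: "('n::finite \<Rightarrow> nat) \<Rightarrow> bool" where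
  "zero_one_index \<gamma> \<longleftrightarrow> (\<forall>j. \<gamma> j \<le> 1)"

definition weight_poly :: "(real^'n::finite \<Rightarrow> real) \<Rightarrow> real \<Rightarrow> real \<Rightarrow> real \<Rightarrow> real \<Rightarrow> real \<Rightarrow> bool" where
  "weight_poly \<Lambda> \<mu>0 \<mu>1 C0 C1 \<mu> \<longleftrightarrow>
     smooth \<Lambda> \<and> (\<forall>\<xi>. \<Lambda> \<xi> > 0) \<and>
     0 < \<mu>0 \<and> \<mu>0 \<le> \<mu>1 \<and> 0 < C0 \<and> C0 \<le> C1 \<and>
     (\<forall>\<xi>. C0 * (1 + norm \<xi>) powr \<mu>0 \<le> \<Lambda> \<xi> \<and> \<Lambda> \<xi> \<le> C1 * (1 + norm \<xi>) powr \<mu>1) \<and>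
     \<mu> \<ge> \<mu>1 \<and>
     (\<forall>\<alpha> \<gamma>. zero_one_index \<gamma> \<longrightarrow>
        (\<exists>C>0. \<forall>\<xi>. \<bar>mono \<gamma> \<xi> * pd (\<lambda>i. \<alpha> i + \<gamma> i) \<Lambda> \<xi>\<bar>
                     \<le> C * \<Lambda> \<xi> powr (1 - real (mlen \<alpha>) / \<mu>)))"

definition S_class :: "real \<Rightarrow> real \<Rightarrow> (real^'n::finite \<Rightarrow> real) \<Rightarrow> (real^'n \<Rightarrow> real^'n \<Rightarrow> complex) set" where
  "S_class m \<rho> \<Lambda> = {\<sigma>. smooth2 \<sigma> \<and>
     (\<forall>\<alpha> \<beta>. \<exists>C. \<forall>x \<xi>. norm (sd \<alpha> \<beta> \<sigma> x \<xi>) \<le> C * \<Lambda> \<xi> powr (m - \<rho> * real (mlen \<beta>)))}"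

definition M_class :: "real \<Rightarrow> real \<Rightarrow> (real^'n::finite \<Rightarrow> real) \<Rightarrow> (real^'n \<Rightarrow> real^'n \<Rightarrow> complex) set" where
  "M_class m \<rho> \<Lambda> = {\<sigma>. \<forall>\<gamma>. zero_one_index \<gamma> \<longrightarrow>
     (\<lambda>x \<xi>. complex_of_real (mono \<gamma> \<xi>) * sd (\<lambda>_. 0) \<gamma> \<sigma> x \<xi>) \<in> S_class m \<rho> \<Lambda>}"

definition seminorm_p :: "(real^'n::finite \<Rightarrow> real) \<Rightarrow> real \<Rightarrow> ('n \<Rightarrow> nat) \<Rightarrow> ('n \<Rightarrow> nat)
     \<Rightarrow> (real^'n \<Rightarrow> real^'n \<Rightarrow> complex) \<Rightarrow> real" where
  "seminorm_p \<Lambda> \<rho> \<alpha> \<beta> \<sigma> =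
     Sup {\<Lambda> \<xi> powr (\<rho> * real (mlen \<beta>)) * norm (sd \<alpha> \<beta> \<sigma> x \<xi>) | x \<xi>. True}"

definition schwartz :: "(real^'n::finite \<Rightarrow> complex) \<Rightarrow> bool" where
  "schwartz \<phi> \<longleftrightarrow> smooth \<phi> \<and>
     (\<forall>\<alpha> (k::nat). \<exists>C. \<forall>x. (1 + norm x) ^ k * norm (pd \<alpha> \<phi> x) \<le> C)"

definition fourier :: "(real^'n::finite \<Rightarrow> complex) \<Rightarrow> real^'n \<Rightarrow> complex" where
  "fourier \<phi> \<xi> = complex_of_real ((2 * pi) powr (- (real CARD('n) / 2))) *
      (LINT x|lborel. cis (- (x \<bullet> \<xi>)) * \<phi> x)"

definition psido :: "(real^'n::finite \<Rightarrow> real^'n \<Rightarrow> complex) \<Rightarrow> (real^'n \<Rightarrow> complex) \<Rightarrow> real^'n \<Rightarrow> complex" where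
  "psido a \<phi> x = complex_of_real ((2 * pi) powr (- (real CARD('n) / 2))) *
      (LINT \<xi>|lborel. cis (x \<bullet> \<xi>) * a x \<xi> * fourier \<phi> \<xi>)"

definition Rop :: "real \<Rightarrow> real \<Rightarrow> real \<Rightarrow> real^'n::finite \<Rightarrow> real^'n \<Rightarrow> (real^'n \<Rightarrow> complex) \<Rightarrow> real^'n \<Rightarrow> complex" where
  "Rop p lam \<tau> x0 \<xi>0 u x = complex_of_real (lam powr (\<tau> * real CARD('n) / p)) *
      cis (lam * (x \<bullet> \<xi>0)) * u ((lam powr \<tau>) *\<^sub>R (x - x0))"

definition Rinv :: "real \<Rightarrow> real \<Rightarrow> real \<Rightarrow> real^'n::finite \<Rightarrow> real^'n \<Rightarrow> (real^'n \<Rightarrow> complex) \<Rightarrow> real^'n \<Rightarrow> complex" where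
  "Rinv p lam \<tau> x0 \<xi>0 u x = complex_of_real (lam powr (- \<tau> * real CARD('n) / p)) *
      cis (- (lam * ((x0 + (lam powr (- \<tau>)) *\<^sub>R x) \<bullet> \<xi>0))) * u (x0 + (lam powr (- \<tau>)) *\<^sub>R x)"

definition scaled_symbol :: "(real^'n::finite \<Rightarrow> real^'n \<Rightarrow> complex) \<Rightarrow> real \<Rightarrow> real \<Rightarrow> real^'n \<Rightarrow> real^'n
     \<Rightarrow> real^'n \<Rightarrow> real^'n \<Rightarrow> complex" where
  "scaled_symbol \<sigma> lam \<tau> x0 \<xi>0 = (\<lambda>x \<eta>. \<sigma> (x0 + (lam powr (- \<tau>)) *\<^sub>R x) (lam *\<^sub>R \<xi>0 + (lam powr \<tau>) *\<^sub>R \<eta>))"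

end

theory Submission
  imports Defs
begin

(* Conjugation by R = R_{lam,tau}(x0,xi0) is, on the Fourier side, the affine change of variables
   x = x0 + lam^-tau x', xi = lam xi0 + lam^tau eta: the modulations e^{i lam x.xi0} of R and R^-1,
   the Jacobians lam^{-+tau n} and the normalisations lam^{+-tau n/p} cancel in pairs. As Bochner
   integrals of non-integrable functions are 0 on both sides, the identity needs no hypothesis on
   sigma, phi or p.

   For the estimate, the chain rule gives d_x^alpha d_eta^beta sigma_{lam,tau}(x,eta) =
   lam^{-tau|alpha|} lam^{tau|beta|} (d^alpha d^beta sigma)(y,zeta) with zeta = lam xi0 + lam^tau eta,
   and the symbol estimate bounds the last factor by p_{alpha,beta}(sigma) Lambda(zeta)^{-rho|beta|}.
   Since lam |xi0| = |zeta - lam^tau eta| <= lam^tau (1+|zeta|)(1+|eta|), the lower bound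
   Lambda >= C0 (1+|.|)^mu0 gives C0^2 (lam |xi0|)^mu0 <= lam^{tau mu0} Lambda(zeta) Lambda(eta),
   which trades Lambda(zeta)^{-1} for Lambda(eta). This works for every tau >= 0; the bound tau <= rho mu0/(1 + rho mu0) only
   makes the resulting power of lam nonpositive. *)

lemma vector_derivative_rescale:
  fixes g :: "real \<Rightarrow> 'b::real_normed_vector"
  assumes "g differentiable (at 0)"
  shows "vector_derivative (\<lambda>r. K *\<^sub>R g (r * k)) (at 0) = (K * k) *\<^sub>R vector_derivative g (at 0)"
proof -
  have g: "(g has_vector_derivative vector_derivative g (at 0)) (at (0 * k))"
    using vector_derivative_works[THEN iffD1, OF assms] by simp
  have "((\<lambda>r::real. r * k) has_vector_derivative k) (at 0)"
    by (auto intro!: derivative_eq_intros simp: has_real_derivative_iff_has_vector_derivative[symmetric])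
  from vector_diff_chain_at[OF this g]
  have "((\<lambda>r. K *\<^sub>R (g \<circ> (\<lambda>r. r * k)) r) has_vector_derivative K *\<^sub>R (k *\<^sub>R vector_derivative g (at 0))) (at 0)"
    by (rule bounded_linear.has_vector_derivative[OF bounded_linear_scaleR_right])
  then show ?thesis
    by (intro vector_derivative_at) (simp add: o_def)
qed

lemma dderivs_compose_diagonal_affine:
  fixes g :: "'a::euclidean_space \<Rightarrow> 'b::real_normed_vector"
  assumes "smooth g" and "set ws \<subseteq> Basis"
    and "\<And>z r w. w \<in> set ws \<Longrightarrow> A (z + r *\<^sub>R w) = A z + (r * k w) *\<^sub>R w"
  shows "dderivs ws (\<lambda>z. g (A z)) = (\<lambda>z. prod_list (map k ws) *\<^sub>R dderivs ws g (A z))"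
  using assms(2,3)
proof (induction ws)
  case Nil
  then show ?case by simp
next
  case (Cons w ws)
  then have IH: "dderivs ws (\<lambda>z. g (A z)) = (\<lambda>z. prod_list (map k ws) *\<^sub>R dderivs ws g (A z))"
    by simp
  show ?case
  proof
    fix z
    have "(\<lambda>r::real. dderivs ws g (A z + r *\<^sub>R w)) differentiable (at 0)"
      using \<open>smooth g\<close> Cons.prems(1) unfolding smooth_def by simp
    then have "vector_derivative (\<lambda>r. prod_list (map k ws) *\<^sub>R dderivs ws g (A z + (r * k w) *\<^sub>R w)) (at 0)
        = (prod_list (map k ws) * k w) *\<^sub>R dderiv w (dderivs ws g) (A z)"
      unfolding dderiv_def by (rule vector_derivative_rescale[where g = "\<lambda>r. dderivs ws g (A z + r *\<^sub>R w)"])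
    then show "dderivs (w # ws) (\<lambda>z. g (A z)) z = prod_list (map k (w # ws)) *\<^sub>R dderivs (w # ws) g (A z)"
      by (simp add: IH dderiv_def Cons.prems(2) mult.commute)
  qed
qed

lemma
  shows distinct_coords: "distinct (coords :: 'n::finite list)"
    and set_coords: "set (coords :: 'n list) = UNIV"
proof -
  have "distinct (coords :: 'n list) \<and> set (coords :: 'n list) = UNIV"
    unfolding coords_def by (rule someI_ex) (use finite_distinct_list[OF finite[of UNIV]] in blast)
  then show "distinct (coords :: 'n list)" "set (coords :: 'n list) = UNIV" by auto
qed

lemma length_mi_dirs: "length (mi_dirs \<alpha>) = mlen \<alpha>"
  by (simp add: mi_dirs_def length_concat o_def sum_list_distinct_conv_sum_set distinct_coords
      set_coords mlen_def)

lemma set_mi_dirs_subset_Basis: "set (mi_dirs \<alpha>) \<subseteq> Basis"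
  by (auto simp: mi_dirs_def Basis_vec_def)

lemma mi_dirs_zero: "mi_dirs (\<lambda>_. 0) = []"
  by (simp add: mi_dirs_def)

lemma sd_affine_rescale:
  fixes \<sigma> :: "real^'n::finite \<Rightarrow> real^'n \<Rightarrow> 'b::real_normed_vector"
  assumes "smooth2 \<sigma>"
  shows "sd \<alpha> \<beta> (\<lambda>x \<eta>. \<sigma> (x0 + s *\<^sub>R x) (\<zeta>0 + t *\<^sub>R \<eta>)) x \<eta>
     = (s ^ mlen \<alpha> * t ^ mlen \<beta>) *\<^sub>R sd \<alpha> \<beta> \<sigma> (x0 + s *\<^sub>R x) (\<zeta>0 + t *\<^sub>R \<eta>)"
proof -
  define A where "A = (\<lambda>z::(real^'n) \<times> (real^'n). (x0 + s *\<^sub>R fst z, \<zeta>0 + t *\<^sub>R snd z))"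
  define k where "k = (\<lambda>w::(real^'n) \<times> (real^'n). if snd w = 0 then s else t)"
  define ws where "ws = map (\<lambda>v. (v, 0::real^'n)) (mi_dirs \<alpha>) @ map (\<lambda>v. (0::real^'n, v)) (mi_dirs \<beta>)"
  have ws_Basis: "set ws \<subseteq> Basis"
    using set_mi_dirs_subset_Basis[of \<alpha>] set_mi_dirs_subset_Basis[of \<beta>]
    by (auto simp: ws_def Basis_prod_def)
  have A_shift: "A (z + r *\<^sub>R w) = A z + (r * k w) *\<^sub>R w" if "w \<in> set ws" for z r w
  proof -
    from that obtain v where "v \<in> Basis" "w = (v, 0) \<or> w = (0, v)"
      using set_mi_dirs_subset_Basis[of \<alpha>] set_mi_dirs_subset_Basis[of \<beta>] by (auto simp: ws_def)
    moreover have "v \<noteq> 0" using \<open>v \<in> Basis\<close> by auto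
    ultimately show ?thesis by (auto simp: A_def k_def algebra_simps)
  qed
  have "map k (map (\<lambda>v. (0, v)) (mi_dirs \<beta>)) = map (\<lambda>_. t) (mi_dirs \<beta>)"
    using set_mi_dirs_subset_Basis[of \<beta>] by (auto simp: k_def intro!: map_cong)
  then have "map k ws = replicate (mlen \<alpha>) s @ replicate (mlen \<beta>) t"
    by (simp add: ws_def k_def o_def length_mi_dirs[symmetric] map_replicate_const)
  then have "prod_list (map k ws) = s ^ mlen \<alpha> * t ^ mlen \<beta>"
    by simp
  moreover have "smooth (\<lambda>z. \<sigma> (fst z) (snd z))"
    using assms by (simp add: smooth2_def)
  ultimately show ?thesis
    using dderivs_compose_diagonal_affine[OF _ ws_Basis A_shift, of "\<lambda>z. \<sigma> (fst z) (snd z)"]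
    by (simp add: sd_def ws_def[symmetric] A_def)
qed

lemma M_class_subset_S_class: "M_class m \<rho> \<Lambda> \<subseteq> S_class m \<rho> \<Lambda>"
proof
  fix \<sigma> assume "\<sigma> \<in> M_class m \<rho> \<Lambda>"
  then have "(\<lambda>x \<xi>. complex_of_real (mono (\<lambda>_. 0) \<xi>) * sd (\<lambda>_. 0) (\<lambda>_. 0) \<sigma> x \<xi>) \<in> S_class m \<rho> \<Lambda>"
    unfolding M_class_def zero_one_index_def by auto
  then show "\<sigma> \<in> S_class m \<rho> \<Lambda>"
    by (simp add: mono_def sd_def mi_dirs_zero)
qed

lemma norm_sd_le_seminorm_p:
  assumes "\<sigma> \<in> S_class 0 \<rho> \<Lambda>" and "\<And>\<xi>. 0 < \<Lambda> \<xi>"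
  shows "\<Lambda> \<xi> powr (\<rho> * real (mlen \<beta>)) * norm (sd \<alpha> \<beta> \<sigma> x \<xi>) \<le> seminorm_p \<Lambda> \<rho> \<alpha> \<beta> \<sigma>"
proof -
  obtain C where C: "\<And>x \<xi>. norm (sd \<alpha> \<beta> \<sigma> x \<xi>) \<le> C * \<Lambda> \<xi> powr (0 - \<rho> * real (mlen \<beta>))"
    using assms(1) unfolding S_class_def by blast
  have "\<Lambda> \<xi> powr (\<rho> * real (mlen \<beta>)) * norm (sd \<alpha> \<beta> \<sigma> x \<xi>) \<le> C" for x \<xi>
  proof -
    have "\<Lambda> \<xi> powr (\<rho> * real (mlen \<beta>)) * norm (sd \<alpha> \<beta> \<sigma> x \<xi>)
        \<le> \<Lambda> \<xi> powr (\<rho> * real (mlen \<beta>)) * (C * \<Lambda> \<xi> powr (0 - \<rho> * real (mlen \<beta>)))"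
      by (intro mult_left_mono C) simp
    also have "\<dots> = C"
      using assms(2)[of \<xi>] by (simp add: powr_minus field_simps)
    finally show ?thesis .
  qed
  then have "bdd_above {\<Lambda> \<xi> powr (\<rho> * real (mlen \<beta>)) * norm (sd \<alpha> \<beta> \<sigma> x \<xi>) | x \<xi>. True}"
    by (intro bdd_aboveI) auto
  then show ?thesis
    unfolding seminorm_p_def by (intro cSup_upper) auto
qed

lemma norm_diff_scaleR_le:
  fixes \<zeta> \<eta> :: "'a::real_normed_vector"
  assumes "1 \<le> t"
  shows "norm (\<zeta> - t *\<^sub>R \<eta>) \<le> t * ((1 + norm \<zeta>) * (1 + norm \<eta>))"
proof -
  have "norm (\<zeta> - t *\<^sub>R \<eta>) \<le> norm \<zeta> + t * norm \<eta>"
    using norm_triangle_ineq4[of \<zeta> "t *\<^sub>R \<eta>"] assms by simp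
  also have "\<dots> \<le> t * (norm \<zeta> + norm \<eta>)"
    using mult_right_mono[OF assms, of "norm \<zeta>"] by (simp add: algebra_simps)
  also have "\<dots> \<le> t * ((1 + norm \<zeta>) * (1 + norm \<eta>))"
    using assms by (intro mult_left_mono) (auto simp: algebra_simps)
  finally show ?thesis .
qed

lemma weight_pos:
  assumes "C0 * (1 + norm \<xi>) powr \<mu>0 \<le> \<Lambda> \<xi>" and "0 < C0"
  shows "0 < \<Lambda> \<xi>"
proof (rule less_le_trans[OF _ assms(1)])
  have "0 < 1 + norm \<xi>"
    by (simp add: add_pos_nonneg)
  then show "0 < C0 * (1 + norm \<xi>) powr \<mu>0"
    using \<open>0 < C0\<close> by simp
qed

lemma weight_lower_bound_diff:
  fixes \<Lambda> :: "'a::real_normed_vector \<Rightarrow> real"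
  assumes lower: "\<And>\<xi>. C0 * (1 + norm \<xi>) powr \<mu>0 \<le> \<Lambda> \<xi>"
    and "0 < C0" "0 \<le> \<mu>0" "1 \<le> t"
  shows "C0\<^sup>2 * norm (\<zeta> - t *\<^sub>R \<eta>) powr \<mu>0 \<le> t powr \<mu>0 * (\<Lambda> \<zeta> * \<Lambda> \<eta>)"
proof -
  have "norm (\<zeta> - t *\<^sub>R \<eta>) powr \<mu>0 \<le> (t * ((1 + norm \<zeta>) * (1 + norm \<eta>))) powr \<mu>0"
    using norm_diff_scaleR_le[OF \<open>1 \<le> t\<close>] \<open>0 \<le> \<mu>0\<close> by (intro powr_mono2) auto
  also have "\<dots> = t powr \<mu>0 * ((1 + norm \<zeta>) powr \<mu>0 * (1 + norm \<eta>) powr \<mu>0)"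
    using \<open>1 \<le> t\<close> by (simp add: powr_mult)
  finally have "C0\<^sup>2 * norm (\<zeta> - t *\<^sub>R \<eta>) powr \<mu>0
      \<le> t powr \<mu>0 * ((C0 * (1 + norm \<zeta>) powr \<mu>0) * (C0 * (1 + norm \<eta>) powr \<mu>0))"
    using \<open>0 < C0\<close> by (simp add: power2_eq_square mult_left_mono mult_ac)
  also have "\<dots> \<le> t powr \<mu>0 * (\<Lambda> \<zeta> * \<Lambda> \<eta>)"
    using lower \<open>0 < C0\<close> by (intro mult_left_mono mult_mono) (auto intro: less_imp_le weight_pos)
  finally show ?thesis .
qed

lemma norm_sd_le_seminorm_p_shifted:
  fixes \<Lambda> :: "real^'n::finite \<Rightarrow> real" and \<beta> :: "'n \<Rightarrow> nat"
  assumes lower: "\<And>\<xi>. C0 * (1 + norm \<xi>) powr \<mu>0 \<le> \<Lambda> \<xi>" and "0 < C0" "0 \<le> \<mu>0"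
    and "0 \<le> \<rho>" and \<sigma>: "\<sigma> \<in> S_class 0 \<rho> \<Lambda>" and "1 \<le> t"
  defines "b \<equiv> \<rho> * real (mlen \<beta>)"
  shows "C0 powr (2 * b) * norm (\<zeta> - t *\<^sub>R \<eta>) powr (\<mu>0 * b) * norm (sd \<alpha> \<beta> \<sigma> y \<zeta>)
     \<le> t powr (\<mu>0 * b) * \<Lambda> \<eta> powr b * seminorm_p \<Lambda> \<rho> \<alpha> \<beta> \<sigma>"
proof -
  have \<Lambda>_pos: "0 < \<Lambda> \<xi>" for \<xi>
    using lower \<open>0 < C0\<close> by (rule weight_pos)
  have "0 \<le> b"
    using \<open>0 \<le> \<rho>\<close> by (simp add: b_def)
  have "(C0\<^sup>2 * norm (\<zeta> - t *\<^sub>R \<eta>) powr \<mu>0) powr b \<le> (t powr \<mu>0 * (\<Lambda> \<zeta> * \<Lambda> \<eta>)) powr b"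
    using weight_lower_bound_diff[OF lower \<open>0 < C0\<close> \<open>0 \<le> \<mu>0\<close> \<open>1 \<le> t\<close>] \<open>0 \<le> b\<close>
    by (intro powr_mono2) auto
  moreover have "C0\<^sup>2 = C0 powr 2"
    using \<open>0 < C0\<close> by (metis powr_numeral less_imp_le)
  ultimately have "C0 powr (2 * b) * norm (\<zeta> - t *\<^sub>R \<eta>) powr (\<mu>0 * b)
      \<le> t powr (\<mu>0 * b) * \<Lambda> \<eta> powr b * \<Lambda> \<zeta> powr b"
    using \<open>0 < C0\<close> \<open>1 \<le> t\<close> \<Lambda>_pos[of \<zeta>] \<Lambda>_pos[of \<eta>]
    by (simp del: powr_numeral add: powr_mult powr_powr mult_ac)
  from mult_right_mono[OF this norm_ge_zero[of "sd \<alpha> \<beta> \<sigma> y \<zeta>"]]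
  have "C0 powr (2 * b) * norm (\<zeta> - t *\<^sub>R \<eta>) powr (\<mu>0 * b) * norm (sd \<alpha> \<beta> \<sigma> y \<zeta>)
      \<le> t powr (\<mu>0 * b) * \<Lambda> \<eta> powr b * (\<Lambda> \<zeta> powr b * norm (sd \<alpha> \<beta> \<sigma> y \<zeta>))"
    by (simp only: mult.assoc)
  also have "\<dots> \<le> t powr (\<mu>0 * b) * \<Lambda> \<eta> powr b * seminorm_p \<Lambda> \<rho> \<alpha> \<beta> \<sigma>"
    unfolding b_def by (intro mult_left_mono norm_sd_le_seminorm_p[OF \<sigma> \<Lambda>_pos]) simp
  finally show ?thesis .
qed

lemma norm_sd_scaled_symbol:
  fixes \<sigma> :: "real^'n::finite \<Rightarrow> real^'n \<Rightarrow> complex"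
  assumes "smooth2 \<sigma>" and "0 < lam"
  shows "norm (sd \<alpha> \<beta> (scaled_symbol \<sigma> lam \<tau> x0 \<xi>0) x \<eta>)
     = lam powr (\<tau> * real (mlen \<beta>) - \<tau> * real (mlen \<alpha>))
       * norm (sd \<alpha> \<beta> \<sigma> (x0 + lam powr (- \<tau>) *\<^sub>R x) (lam *\<^sub>R \<xi>0 + lam powr \<tau> *\<^sub>R \<eta>))"
proof -
  have "(lam powr (- \<tau>)) ^ mlen \<alpha> = lam powr (- \<tau> * real (mlen \<alpha>))"
    using \<open>0 < lam\<close> by (subst powr_realpow[symmetric]) (simp_all add: powr_powr)
  moreover have "(lam powr \<tau>) ^ mlen \<beta> = lam powr (\<tau> * real (mlen \<beta>))"
    using \<open>0 < lam\<close> by (subst powr_realpow[symmetric]) (simp_all add: powr_powr)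
  ultimately show ?thesis
    unfolding scaled_symbol_def sd_affine_rescale[OF \<open>smooth2 \<sigma>\<close>]
    by (simp add: powr_diff powr_minus divide_inverse mult_ac)
qed

lemma norm_sd_scaled_symbol_le:
  fixes \<Lambda> :: "real^'n::finite \<Rightarrow> real"
  assumes lower: "\<And>\<xi>. C0 * (1 + norm \<xi>) powr \<mu>0 \<le> \<Lambda> \<xi>" and "0 < C0" "0 \<le> \<mu>0"
    and "0 \<le> \<rho>" and \<sigma>: "\<sigma> \<in> S_class 0 \<rho> \<Lambda>"
    and "1 \<le> lam" "0 \<le> \<tau>" "\<xi>0 \<noteq> 0"
  shows "norm (sd \<alpha> \<beta> (scaled_symbol \<sigma> lam \<tau> x0 \<xi>0) x \<eta>)
     \<le> C0 powr (- 2 * \<rho> * real (mlen \<beta>)) * seminorm_p \<Lambda> \<rho> \<alpha> \<beta> \<sigma>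
         * \<Lambda> \<eta> powr (\<rho> * real (mlen \<beta>)) / norm \<xi>0 powr (\<rho> * \<mu>0 * real (mlen \<beta>))
         * lam powr (- \<tau> * real (mlen \<alpha>))
         * lam powr (- (\<rho> * \<mu>0 - (1 + \<rho> * \<mu>0) * \<tau>) * real (mlen \<beta>))"
proof -
  define a B where "a = real (mlen \<alpha>)" and "B = real (mlen \<beta>)"
  define b t where "b = \<rho> * B" and "t = lam powr \<tau>"
  define N where "N = norm (sd \<alpha> \<beta> \<sigma> (x0 + lam powr (- \<tau>) *\<^sub>R x) (lam *\<^sub>R \<xi>0 + t *\<^sub>R \<eta>))"
  define P where "P = seminorm_p \<Lambda> \<rho> \<alpha> \<beta> \<sigma>"
  define D where "D = C0 powr (2 * b) * (lam * norm \<xi>0) powr (\<mu>0 * b)"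
  have "0 < lam" "1 \<le> t" "0 < norm \<xi>0" "smooth2 \<sigma>"
    using assms by (auto simp: t_def ge_one_powr_ge_zero S_class_def)
  then have "0 < D"
    using \<open>0 < C0\<close> by (simp add: D_def)
  have "D * N \<le> t powr (\<mu>0 * b) * \<Lambda> \<eta> powr b * P"
    using norm_sd_le_seminorm_p_shifted[OF lower \<open>0 < C0\<close> \<open>0 \<le> \<mu>0\<close> \<open>0 \<le> \<rho>\<close> \<sigma> \<open>1 \<le> t\<close>,
        of \<beta> "lam *\<^sub>R \<xi>0 + t *\<^sub>R \<eta>" \<eta> \<alpha> "x0 + lam powr (- \<tau>) *\<^sub>R x"] \<open>0 < lam\<close>
    by (simp add: D_def N_def P_def b_def B_def)
  then have "norm (sd \<alpha> \<beta> (scaled_symbol \<sigma> lam \<tau> x0 \<xi>0) x \<eta>)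
      \<le> lam powr (\<tau> * B - \<tau> * a) * (t powr (\<mu>0 * b) * \<Lambda> \<eta> powr b * P / D)"
    unfolding norm_sd_scaled_symbol[OF \<open>smooth2 \<sigma>\<close> \<open>0 < lam\<close>] N_def[unfolded t_def, symmetric]
      a_def[symmetric] B_def[symmetric]
    using \<open>0 < D\<close> by (intro mult_left_mono) (simp_all add: pos_le_divide_eq mult.commute)
  also have "\<dots> = C0 powr (- 2 * b) * P * \<Lambda> \<eta> powr b / norm \<xi>0 powr (\<mu>0 * b)
      * lam powr (- \<tau> * a) * lam powr (- (\<rho> * \<mu>0 - (1 + \<rho> * \<mu>0) * \<tau>) * B)"
  proof -
    have "(\<tau> * B - \<tau> * a) + \<tau> * (\<mu>0 * b) - \<mu>0 * b = - \<tau> * a + - (\<rho> * \<mu>0 - (1 + \<rho> * \<mu>0) * \<tau>) * B"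
      by (simp add: b_def algebra_simps)
    then have "lam powr (\<tau> * B - \<tau> * a) * t powr (\<mu>0 * b) / lam powr (\<mu>0 * b)
        = lam powr (- \<tau> * a) * lam powr (- (\<rho> * \<mu>0 - (1 + \<rho> * \<mu>0) * \<tau>) * B)"
      by (metis t_def powr_powr powr_add powr_diff)
    moreover have "D = C0 powr (2 * b) * lam powr (\<mu>0 * b) * norm \<xi>0 powr (\<mu>0 * b)"
      using \<open>0 < lam\<close> by (simp add: D_def powr_mult)
    moreover have "C0 powr (- 2 * b) = 1 / C0 powr (2 * b)"
      by (simp add: powr_minus divide_inverse)
    ultimately show ?thesis
      using \<open>0 < C0\<close> \<open>0 < lam\<close> \<open>0 < norm \<xi>0\<close>
      by (simp add: field_simps)
  qed
  finally show ?thesis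
    by (simp add: P_def a_def B_def b_def mult_ac)
qed

lemma lborel_integral_affine:
  fixes f :: "'a::euclidean_space \<Rightarrow> 'b::{banach, second_countable_topology}" and c :: real
  assumes c: "c \<noteq> 0"
  shows "(\<integral>x. f x \<partial>lborel) = (\<bar>c\<bar> ^ DIM('a)) *\<^sub>R (\<integral>x. f (t + c *\<^sub>R x) \<partial>lborel)"
proof cases
  assume [measurable]: "f \<in> borel_measurable borel"
  have "(\<integral>x. f x \<partial>lborel)
      = (\<integral>x. \<bar>c\<bar> ^ DIM('a) *\<^sub>R f x \<partial>distr lborel borel (\<lambda>x. t + c *\<^sub>R x))"
    by (subst lborel_affine[OF c, of t], subst integral_density) auto
  then show ?thesis
    by (subst (asm) integral_distr) auto
next
  assume f: "f \<notin> borel_measurable borel"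
  have "(\<lambda>x. f (t + c *\<^sub>R x)) \<notin> borel_measurable borel"
  proof
    assume "(\<lambda>x. f (t + c *\<^sub>R x)) \<in> borel_measurable borel"
    then have "(\<lambda>y. f (t + c *\<^sub>R ((1 / c) *\<^sub>R (y - t)))) \<in> borel_measurable borel"
      by (rule measurable_compose[rotated]) simp
    with f c show False
      by simp
  qed
  with f have "\<not> integrable lborel (\<lambda>x. f (t + c *\<^sub>R x))" "\<not> integrable lborel f"
    using borel_measurable_integrable[of lborel] by auto
  then show ?thesis
    by (simp add: not_integrable_integral_eq)
qed

lemma fourier_Rop:
  fixes \<phi> :: "real^'n::finite \<Rightarrow> complex"
  assumes "0 < lam"
  shows "fourier (Rop p lam \<tau> x0 \<xi>0 \<phi>) \<xi> =
     ((lam powr (- \<tau>)) ^ CARD('n) * lam powr (\<tau> * real CARD('n) / p)) *\<^sub>R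
       (cis (lam * (x0 \<bullet> \<xi>0) - x0 \<bullet> \<xi>) * fourier \<phi> (lam powr (- \<tau>) *\<^sub>R (\<xi> - lam *\<^sub>R \<xi>0)))"
proof -
  define s where "s = lam powr (- \<tau>)"
  define K where "K = complex_of_real (lam powr (\<tau> * real CARD('n) / p))"
  define A where "A = lam * (x0 \<bullet> \<xi>0) - x0 \<bullet> \<xi>"
  have "s \<noteq> 0" "lam powr \<tau> * s = 1"
    using assms by (simp_all add: s_def powr_add[symmetric])
  have integrand: "cis (- ((x0 + s *\<^sub>R y) \<bullet> \<xi>)) * Rop p lam \<tau> x0 \<xi>0 \<phi> (x0 + s *\<^sub>R y)
      = K * cis A * (cis (- (y \<bullet> (s *\<^sub>R (\<xi> - lam *\<^sub>R \<xi>0)))) * \<phi> y)" for y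
  proof -
    have "- ((x0 + s *\<^sub>R y) \<bullet> \<xi>) + lam * ((x0 + s *\<^sub>R y) \<bullet> \<xi>0) = A + - (y \<bullet> (s *\<^sub>R (\<xi> - lam *\<^sub>R \<xi>0)))"
      by (simp add: A_def algebra_simps)
    then have "cis (- ((x0 + s *\<^sub>R y) \<bullet> \<xi>)) * cis (lam * ((x0 + s *\<^sub>R y) \<bullet> \<xi>0))
        = cis A * cis (- (y \<bullet> (s *\<^sub>R (\<xi> - lam *\<^sub>R \<xi>0))))"
      unfolding cis_mult by simp
    moreover have "lam powr \<tau> *\<^sub>R (x0 + s *\<^sub>R y - x0) = y"
      using \<open>lam powr \<tau> * s = 1\<close> by simp
    ultimately show ?thesis
      unfolding Rop_def K_def[symmetric] by (metis (no_types, lifting) mult.assoc mult.commute)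
  qed
  have "(\<integral>x. cis (- (x \<bullet> \<xi>)) * Rop p lam \<tau> x0 \<xi>0 \<phi> x \<partial>lborel)
      = (\<bar>s\<bar> ^ CARD('n)) *\<^sub>R (K * cis A * (\<integral>y. cis (- (y \<bullet> (s *\<^sub>R (\<xi> - lam *\<^sub>R \<xi>0)))) * \<phi> y \<partial>lborel))"
    by (subst lborel_integral_affine[OF \<open>s \<noteq> 0\<close>, of _ x0]) (simp add: integrand)
  then show ?thesis
    using assms by (simp add: fourier_def s_def K_def A_def scaleR_conv_of_real mult_ac)
qed

lemma psido_integrand_Rop:
  fixes \<sigma> :: "real^'n::finite \<Rightarrow> real^'n \<Rightarrow> complex" and \<phi> :: "real^'n \<Rightarrow> complex"
    and lam \<tau> :: real and x0 x \<xi>0 \<eta> :: "real^'n"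
  assumes "0 < lam"
  defines "y \<equiv> x0 + lam powr (- \<tau>) *\<^sub>R x" and "\<zeta> \<equiv> lam *\<^sub>R \<xi>0 + lam powr \<tau> *\<^sub>R \<eta>"
  shows "cis (y \<bullet> \<zeta>) * \<sigma> y \<zeta> * fourier (Rop p lam \<tau> x0 \<xi>0 \<phi>) \<zeta>
     = complex_of_real ((lam powr (- \<tau>)) ^ CARD('n) * lam powr (\<tau> * real CARD('n) / p))
       * cis (lam * (y \<bullet> \<xi>0)) * (cis (x \<bullet> \<eta>) * scaled_symbol \<sigma> lam \<tau> x0 \<xi>0 x \<eta> * fourier \<phi> \<eta>)"
proof -
  define s t where "s = lam powr (- \<tau>)" and "t = lam powr \<tau>"
  define A where "A = lam * (x0 \<bullet> \<xi>0) - x0 \<bullet> \<zeta>"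
  have "s * t = 1"
    using \<open>0 < lam\<close> by (simp add: s_def t_def powr_add[symmetric])
  then have "lam powr (- \<tau>) *\<^sub>R (\<zeta> - lam *\<^sub>R \<xi>0) = \<eta>"
    by (simp add: \<zeta>_def s_def[symmetric] t_def[symmetric])
  then have F: "fourier (Rop p lam \<tau> x0 \<xi>0 \<phi>) \<zeta>
      = complex_of_real ((lam powr (- \<tau>)) ^ CARD('n) * lam powr (\<tau> * real CARD('n) / p)) * (cis A * fourier \<phi> \<eta>)"
    using fourier_Rop[OF \<open>0 < lam\<close>, of p \<tau> x0 \<xi>0 \<phi> \<zeta>] by (simp add: A_def scaleR_conv_of_real)
  have "y \<bullet> \<zeta> - x0 \<bullet> \<zeta> = lam * (s * (x \<bullet> \<xi>0)) + (s * t) * (x \<bullet> \<eta>)"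
    by (simp add: y_def \<zeta>_def s_def t_def algebra_simps)
  then have "y \<bullet> \<zeta> + A = lam * (y \<bullet> \<xi>0) + x \<bullet> \<eta>"
    using \<open>s * t = 1\<close> by (simp add: A_def y_def s_def algebra_simps)
  then have phase: "cis (y \<bullet> \<zeta>) * cis A = cis (lam * (y \<bullet> \<xi>0)) * cis (x \<bullet> \<eta>)"
    unfolding cis_mult by simp
  have "scaled_symbol \<sigma> lam \<tau> x0 \<xi>0 x \<eta> = \<sigma> y \<zeta>"
    by (simp add: scaled_symbol_def y_def \<zeta>_def)
  then show ?thesis
    unfolding F by (simp add: mult.assoc mult.left_commute[of "cis A"] phase[unfolded mult.assoc])
qed

lemma psido_Rop:
  fixes \<sigma> :: "real^'n::finite \<Rightarrow> real^'n \<Rightarrow> complex" and \<phi> :: "real^'n \<Rightarrow> complex"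
  assumes "0 < lam"
  shows "psido \<sigma> (Rop p lam \<tau> x0 \<xi>0 \<phi>) (x0 + lam powr (- \<tau>) *\<^sub>R x)
     = complex_of_real (lam powr (\<tau> * real CARD('n) / p)) * cis (lam * ((x0 + lam powr (- \<tau>) *\<^sub>R x) \<bullet> \<xi>0))
       * psido (scaled_symbol \<sigma> lam \<tau> x0 \<xi>0) \<phi> x"
proof -
  define y where "y = x0 + lam powr (- \<tau>) *\<^sub>R x"
  define c where "c = complex_of_real ((lam powr (- \<tau>)) ^ CARD('n) * lam powr (\<tau> * real CARD('n) / p))"
  have "(\<integral>\<zeta>. cis (y \<bullet> \<zeta>) * \<sigma> y \<zeta> * fourier (Rop p lam \<tau> x0 \<xi>0 \<phi>) \<zeta> \<partial>lborel)
      = \<bar>lam powr \<tau>\<bar> ^ DIM(real^'n) *\<^sub>R (\<integral>\<eta>. cis (y \<bullet> (lam *\<^sub>R \<xi>0 + lam powr \<tau> *\<^sub>R \<eta>))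
        * \<sigma> y (lam *\<^sub>R \<xi>0 + lam powr \<tau> *\<^sub>R \<eta>)
        * fourier (Rop p lam \<tau> x0 \<xi>0 \<phi>) (lam *\<^sub>R \<xi>0 + lam powr \<tau> *\<^sub>R \<eta>) \<partial>lborel)"
    using assms by (intro lborel_integral_affine) simp
  also have "\<dots> = \<bar>lam powr \<tau>\<bar> ^ DIM(real^'n) *\<^sub>R (\<integral>\<eta>. c * cis (lam * (y \<bullet> \<xi>0))
        * (cis (x \<bullet> \<eta>) * scaled_symbol \<sigma> lam \<tau> x0 \<xi>0 x \<eta> * fourier \<phi> \<eta>) \<partial>lborel)"
    unfolding y_def c_def psido_integrand_Rop[OF assms] ..
  also have "\<dots> = complex_of_real ((lam powr \<tau>) ^ CARD('n) * (lam powr (- \<tau>)) ^ CARD('n)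
        * lam powr (\<tau> * real CARD('n) / p)) * cis (lam * (y \<bullet> \<xi>0))
        * (\<integral>\<eta>. cis (x \<bullet> \<eta>) * scaled_symbol \<sigma> lam \<tau> x0 \<xi>0 x \<eta> * fourier \<phi> \<eta> \<partial>lborel)"
    unfolding integral_mult_right_zero by (simp add: c_def scaleR_conv_of_real mult_ac)
  also have "(lam powr \<tau>) ^ CARD('n) * (lam powr (- \<tau>)) ^ CARD('n) = 1"
    using assms by (simp flip: power_mult_distrib powr_add)
  finally show ?thesis
    by (simp add: psido_def y_def mult_ac)
qed

lemma Rinv_psido_Rop:
  fixes \<sigma> :: "real^'n::finite \<Rightarrow> real^'n \<Rightarrow> complex" and \<phi> :: "real^'n \<Rightarrow> complex"
  assumes "0 < lam"
  shows "Rinv p lam \<tau> x0 \<xi>0 (psido \<sigma> (Rop p lam \<tau> x0 \<xi>0 \<phi>)) = psido (scaled_symbol \<sigma> lam \<tau> x0 \<xi>0) \<phi>"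
proof
  fix x
  define a where "a = lam * ((x0 + lam powr (- \<tau>) *\<^sub>R x) \<bullet> \<xi>0)"
  have "Rinv p lam \<tau> x0 \<xi>0 (psido \<sigma> (Rop p lam \<tau> x0 \<xi>0 \<phi>)) x
      = complex_of_real (lam powr (- \<tau> * real CARD('n) / p) * lam powr (\<tau> * real CARD('n) / p))
        * (cis (- a) * cis a) * psido (scaled_symbol \<sigma> lam \<tau> x0 \<xi>0) \<phi> x"
    unfolding Rinv_def psido_Rop[OF assms] a_def[symmetric] of_real_mult by (simp only: mult_ac)
  also have "\<dots> = psido (scaled_symbol \<sigma> lam \<tau> x0 \<xi>0) \<phi> x"
    using assms by (simp add: cis_mult flip: powr_add)
  finally show "Rinv p lam \<tau> x0 \<xi>0 (psido \<sigma> (Rop p lam \<tau> x0 \<xi>0 \<phi>)) x = psido (scaled_symbol \<sigma> lam \<tau> x0 \<xi>0) \<phi> x" .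
qed

theorem mainTheorem3:
  fixes \<Lambda> :: "real^'n::finite \<Rightarrow> real"
    and \<mu>0 \<mu>1 C0 C1 \<mu> \<rho> :: real
  assumes weight: "weight_poly \<Lambda> \<mu>0 \<mu>1 C0 C1 \<mu>"
    and rho: "0 < \<rho>" "\<rho> \<le> 1 / \<mu>"
  shows "(\<forall>(p::real) (m::real) \<sigma> (lam::real) (\<tau>::real) (x0::real^'n) (\<xi>0::real^'n) \<phi>.
            1 < p \<and> \<sigma> \<in> M_class m \<rho> \<Lambda> \<and> 0 < lam \<and> 0 \<le> \<tau> \<and> schwartz \<phi> \<longrightarrow>
            Rinv p lam \<tau> x0 \<xi>0 (psido \<sigma> (Rop p lam \<tau> x0 \<xi>0 \<phi>))
              = psido (scaled_symbol \<sigma> lam \<tau> x0 \<xi>0) \<phi>)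
       \<and> (\<forall>\<beta>::'n \<Rightarrow> nat. \<exists>C>0. \<forall>\<sigma> (lam::real) (\<tau>::real) (x0::real^'n) (\<xi>0::real^'n) (\<alpha>::'n \<Rightarrow> nat) x \<eta>.
            \<sigma> \<in> M_class 0 \<rho> \<Lambda> \<and> 1 \<le> lam \<and> 0 \<le> \<tau> \<and> \<tau> \<le> \<rho> * \<mu>0 / (1 + \<rho> * \<mu>0) \<and> \<xi>0 \<noteq> 0 \<longrightarrow>
            norm (sd \<alpha> \<beta> (scaled_symbol \<sigma> lam \<tau> x0 \<xi>0) x \<eta>)
              \<le> C * seminorm_p \<Lambda> \<rho> \<alpha> \<beta> \<sigma>
                  * \<Lambda> \<eta> powr (\<rho> * real (mlen \<beta>)) / norm \<xi>0 powr (\<rho> * \<mu>0 * real (mlen \<beta>))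
                  * lam powr (- \<tau> * real (mlen \<alpha>))
                  * lam powr (- (\<rho> * \<mu>0 - (1 + \<rho> * \<mu>0) * \<tau>) * real (mlen \<beta>)))"
proof -
  have lower: "\<And>\<xi>. C0 * (1 + norm \<xi>) powr \<mu>0 \<le> \<Lambda> \<xi>" and "0 < C0" "0 < \<mu>0"
    using weight unfolding weight_poly_def by auto
  show ?thesis
  proof (intro conjI allI impI)
    fix p m lam \<tau> :: real and \<sigma> :: "real^'n \<Rightarrow> real^'n \<Rightarrow> complex"
      and x0 \<xi>0 :: "real^'n" and \<phi> :: "real^'n \<Rightarrow> complex"
    assume "1 < p \<and> \<sigma> \<in> M_class m \<rho> \<Lambda> \<and> 0 < lam \<and> 0 \<le> \<tau> \<and> schwartz \<phi>"
    then show "Rinv p lam \<tau> x0 \<xi>0 (psido \<sigma> (Rop p lam \<tau> x0 \<xi>0 \<phi>)) = psido (scaled_symbol \<sigma> lam \<tau> x0 \<xi>0) \<phi>"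
      by (simp add: Rinv_psido_Rop)
  next
    fix \<beta> :: "'n \<Rightarrow> nat"
    show "\<exists>C>0. \<forall>\<sigma> lam \<tau> x0 \<xi>0 \<alpha> x \<eta>.
            \<sigma> \<in> M_class 0 \<rho> \<Lambda> \<and> 1 \<le> lam \<and> 0 \<le> \<tau> \<and> \<tau> \<le> \<rho> * \<mu>0 / (1 + \<rho> * \<mu>0) \<and> \<xi>0 \<noteq> 0 \<longrightarrow>
            norm (sd \<alpha> \<beta> (scaled_symbol \<sigma> lam \<tau> x0 \<xi>0) x \<eta>)
              \<le> C * seminorm_p \<Lambda> \<rho> \<alpha> \<beta> \<sigma>
                  * \<Lambda> \<eta> powr (\<rho> * real (mlen \<beta>)) / norm \<xi>0 powr (\<rho> * \<mu>0 * real (mlen \<beta>))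
                  * lam powr (- \<tau> * real (mlen \<alpha>))
                  * lam powr (- (\<rho> * \<mu>0 - (1 + \<rho> * \<mu>0) * \<tau>) * real (mlen \<beta>))"
      using \<open>0 < C0\<close> \<open>0 < \<mu>0\<close> rho(1)
      by (intro exI[of _ "C0 powr (- 2 * \<rho> * real (mlen \<beta>))"] conjI allI impI
          norm_sd_scaled_symbol_le[OF lower]) (auto intro: M_class_subset_S_class[THEN subsetD])
  qed
qed

end
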